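(* Fix an integer $t\ge 2$ and a real base $b>1$, and let $\log$ and $\exp$ denote the logarithm and exponential to base $b$. For an integer $p\ge 1$, let $T_t(p)$ denote the number of $t$-ary trees whose path length equals $p$. Let $h(x)=-x\log x-(1-x)\log(1-x)$ be the binary entropy function and set $\alpha=h(t^{-1})\,t\log t$. Then, as $p\to\infty$, \[ T_t(p)=\exp\!\Big(\frac{\alpha p}{\log p}\,\big(1+o(1)\big)\Big), \] i.e. $\log T_t(p)\big/\big(\alpha p/\log p\big)\to 1$ as $p\to\infty$.
   Context: A $t$-ary tree is defined recursively as either empty or consisting of a root node together with an ordered $t$-tuple $(T_1,\dots,T_t)$ of disjoint $t$-ary subtrees, any of which may be empty; when $T_i$ is non-empty its root is a child of the root. Thus $t$-ary trees are ordered (plane) trees in which each node has $t$ labeled child positions, and two trees differ if a child occupies a different position. The depth of a node is the number of edges on the path from the root to it. The path length of a non-empty $t$-ary tree is the sum of the depths of all its nodes, i.e. $\sum_{j\ge1} j D_j$ where $D_j$ is the number of nodes at depth $j$. Only finite trees are considered; the number of nodes is not fixed in $T_t(p)$. *)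

theory Defs
  imports Complex_Main
begin

text \<open>Trees with ordered child positions.  Leaf is the empty tree;
  Node ts is a root whose i-th child position holds the subtree ts ! i
  (Leaf meaning that position is empty).\<close>
datatype tree = Leaf | Node "tree list"

fun tary :: "nat \<Rightarrow> tree \<Rightarrow> bool" where
  "tary t Leaf = True"
| "tary t (Node ts) = (length ts = t \<and> (\<forall>s\<in>set ts. tary t s))"

fun nodes :: "tree \<Rightarrow> nat" where
  "nodes Leaf = 0"
| "nodes (Node ts) = 1 + sum_list (map nodes ts)"

text \<open>Path length = sum of depths of all nodes: every node of a subtree
  gets its depth increased by one.\<close>
fun path_length :: "tree \<Rightarrow> nat" where
  "path_length Leaf = 0"
| "path_length (Node ts) = sum_list (map (\<lambda>s. path_length s + nodes s) ts)"

definition T :: "nat \<Rightarrow> nat \<Rightarrow> nat" where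
  "T t p = card {x. tary t x \<and> x \<noteq> Leaf \<and> path_length x = p}"

definition entropy :: "real \<Rightarrow> real \<Rightarrow> real" where
  "entropy b x = - x * log b x - (1 - x) * log b (1 - x)"

end

theory Submission
  imports Defs "HOL-Real_Asymp.Real_Asymp"
begin

(*
  Write K = t ln t - (t - 1) ln (t - 1) = t h(1/t) (natural logarithms); the claim is
  ln T_t(p) ~ K ln t * p / ln p.

  Upper bound: at most t^j nodes have depth j, so a tree of path length p has at most
  p/k + t^k nodes, for every k.  The numbers rho = (t - 1)^(t - 1) / t^t = exp (-K) and
  tau = t / (t - 1) satisfy tau = 1 + rho tau^t, and induction on the size shows that the
  sum of rho^(number of nodes) over the trees with at most N nodes is at most tau; so there
  are at most tau exp (K N) of them.  Taking t^k ~ p / (ln p)^2 gives the upper bound.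

  Lower bound: the forests with n_i nodes at depth i are counted by the product of the
  binomials C(t n_i, n_(i+1)), and their path length is the sum of i n_i.  Take D complete
  levels, then L + 1 levels of width W = t^D, then two levels that make the path length
  exactly p.  This gives T_t(p) >= C(t W, W)^L with ln C(t W, W) >= K W - ln (t W + 1), and
  for W ~ p / (ln p)^(3/2) the plateau has L W ~ p / log_t p nodes.
*)

section \<open>Upper bound\<close>

(* At most t^j nodes have depth j; all other nodes have depth at least k. *)
lemma nodes_le_path_length:
  assumes "tary t x" "2 \<le> t"
  shows "k * nodes x \<le> path_length x + k * t ^ k"
  using assms(1)
proof (induction x arbitrary: k)
  case (Node ts)
  show ?case
  proof (cases k)
    case (Suc j)
    have len: "length ts = t" and IH: "\<And>s. s \<in> set ts \<Longrightarrow> j * nodes s \<le> path_length s + j * t ^ j"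
      using Node by auto
    have "Suc j < 2 ^ Suc j" by (rule less_exp)
    also have "(2::nat) ^ Suc j \<le> t ^ Suc j" using assms(2) by (rule power_mono) simp
    finally have small: "Suc j \<le> t ^ Suc j" by simp
    have "Suc j * nodes (Node ts) = Suc j + (\<Sum>s\<leftarrow>ts. nodes s + j * nodes s)"
      by (simp add: sum_list_const_mult sum_list_addf)
    also have "(\<Sum>s\<leftarrow>ts. nodes s + j * nodes s) \<le> (\<Sum>s\<leftarrow>ts. (path_length s + nodes s) + j * t ^ j)"
      using IH by (intro sum_list_mono) fastforce
    also have "\<dots> = path_length (Node ts) + t * (j * t ^ j)"
      by (simp add: sum_list_addf sum_list_triv len)
    finally show ?thesis using small unfolding Suc by (simp add: algebra_simps)
  qed simp
qed simp

definition trees_upto :: "nat \<Rightarrow> nat \<Rightarrow> tree set" where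
  "trees_upto t N = {x. tary t x \<and> nodes x \<le> N}"

lemma trees_upto_0: "trees_upto t 0 = {Leaf}"
  by (auto simp: trees_upto_def elim: nodes.elims)

lemma trees_upto_Suc_subset:
  "trees_upto t (Suc N) \<subseteq> insert Leaf (Node ` {ts. set ts \<subseteq> trees_upto t N \<and> length ts = t})"
proof
  fix x assume x: "x \<in> trees_upto t (Suc N)"
  show "x \<in> insert Leaf (Node ` {ts. set ts \<subseteq> trees_upto t N \<and> length ts = t})"
  proof (cases x)
    case (Node ts)
    have "nodes s \<le> N" if "s \<in> set ts" for s
      using member_le_sum_list[of "nodes s" "map nodes ts"] that x Node by (simp add: trees_upto_def)
    then show ?thesis using x Node by (auto simp: trees_upto_def)
  qed simp
qed

lemma finite_trees_upto: "finite (trees_upto t N)"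
proof (induction N)
  case (Suc N)
  then show ?case
    using finite_subset[OF trees_upto_Suc_subset] finite_lists_length_eq by blast
qed (simp add: trees_upto_0)

lemma sum_prod_list_lists_length_eq:
  fixes g :: "'a \<Rightarrow> 'b::comm_semiring_1"
  assumes "finite A"
  shows "(\<Sum>ts\<in>{ts. set ts \<subseteq> A \<and> length ts = k}. prod_list (map g ts)) = sum g A ^ k"
proof (induction k)
  case (Suc k)
  let ?B = "{ts. set ts \<subseteq> A \<and> length ts = k}"
  have "(\<Sum>ts\<in>{ts. set ts \<subseteq> A \<and> length ts = Suc k}. prod_list (map g ts))
      = (\<Sum>(ts, a)\<in>?B \<times> A. g a * prod_list (map g ts))"
    unfolding lists_length_Suc_eq by (subst sum.reindex) (auto simp: inj_on_def case_prod_beta)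
  also have "\<dots> = (\<Sum>ts\<in>?B. prod_list (map g ts)) * sum g A"
    by (simp add: sum.cartesian_product[symmetric] sum_distrib_left sum_distrib_right mult.commute)
  finally show ?case using Suc by (simp add: mult.commute)
qed (simp add: length_0_conv cong: conj_cong)

lemma power_sum_list: "c ^ sum_list (map f xs) = prod_list (map (\<lambda>x. c ^ f x) xs)"
  by (induction xs) (auto simp: power_add)

lemma sum_weight_trees_upto_le:
  fixes \<rho> \<tau> :: real
  assumes "0 \<le> \<rho>" "1 \<le> \<tau>" "1 + \<rho> * \<tau> ^ t \<le> \<tau>"
  shows "(\<Sum>x\<in>trees_upto t N. \<rho> ^ nodes x) \<le> \<tau>"
proof (induction N)
  case 0 then show ?case using assms by (simp add: trees_upto_0)
next
  case (Suc N)
  let ?L = "{ts. set ts \<subseteq> trees_upto t N \<and> length ts = t}"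
  have fin: "finite ?L" by (rule finite_lists_length_eq[OF finite_trees_upto])
  have "(\<Sum>x\<in>trees_upto t (Suc N). \<rho> ^ nodes x) \<le> (\<Sum>x\<in>insert Leaf (Node ` ?L). \<rho> ^ nodes x)"
    using trees_upto_Suc_subset fin assms(1) by (intro sum_mono2) auto
  also have "\<dots> = 1 + (\<Sum>ts\<in>?L. \<rho> * prod_list (map (\<lambda>s. \<rho> ^ nodes s) ts))"
    using fin by (subst sum.insert) (auto simp: sum.reindex inj_on_def power_sum_list)
  also have "\<dots> = 1 + \<rho> * (\<Sum>x\<in>trees_upto t N. \<rho> ^ nodes x) ^ t"
    by (simp add: sum_distrib_left[symmetric] sum_prod_list_lists_length_eq[OF finite_trees_upto])
  also have "\<dots> \<le> 1 + \<rho> * \<tau> ^ t"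
    using Suc assms by (intro add_left_mono mult_left_mono power_mono) (auto intro: sum_nonneg)
  finally show ?case using assms by linarith
qed

lemma card_trees_upto_le:
  fixes \<rho> \<tau> :: real
  assumes "0 < \<rho>" "\<rho> \<le> 1" "1 \<le> \<tau>" "1 + \<rho> * \<tau> ^ t \<le> \<tau>"
  shows "card (trees_upto t N) * \<rho> ^ N \<le> \<tau>"
proof -
  have "card (trees_upto t N) * \<rho> ^ N = (\<Sum>x\<in>trees_upto t N. \<rho> ^ N)" by simp
  also have "\<dots> \<le> (\<Sum>x\<in>trees_upto t N. \<rho> ^ nodes x)"
    using assms by (intro sum_mono power_decreasing) (auto simp: trees_upto_def)
  also have "\<dots> \<le> \<tau>" using sum_weight_trees_upto_le assms by auto
  finally show ?thesis .
qed

lemma path_length_trees_subset_trees_upto: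
  assumes "2 \<le> t" "1 \<le> k"
  shows "{x. tary t x \<and> x \<noteq> Leaf \<and> path_length x = p} \<subseteq> trees_upto t (p div k + t ^ k)"
proof
  fix x assume "x \<in> {x. tary t x \<and> x \<noteq> Leaf \<and> path_length x = p}"
  then have x: "tary t x" "path_length x = p" by auto
  have "nodes x = k * nodes x div k" using assms(2) by simp
  also have "\<dots> \<le> (p + t ^ k * k) div k"
    using nodes_le_path_length[OF x(1) assms(1), of k] x(2) by (intro div_le_mono) (simp add: mult.commute)
  also have "\<dots> = p div k + t ^ k" using assms(2) by simp
  finally show "x \<in> trees_upto t (p div k + t ^ k)"
    using x by (simp add: trees_upto_def)
qed

lemma finite_path_length_trees: "2 \<le> t \<Longrightarrow> finite {x. tary t x \<and> x \<noteq> Leaf \<and> path_length x = p}"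
  using finite_subset[OF path_length_trees_subset_trees_upto finite_trees_upto] by blast

lemma T_le_card_trees_upto:
  assumes "2 \<le> t" "1 \<le> k"
  shows "T t p \<le> card (trees_upto t (p div k + t ^ k))"
  unfolding T_def by (rule card_mono[OF finite_trees_upto path_length_trees_subset_trees_upto[OF assms]])

(* exp (tree_growth t) = t^t / (t - 1)^(t - 1) is the exponential growth rate of the number
   of t-ary trees with n nodes. *)
definition tree_growth :: "nat \<Rightarrow> real" where
  "tree_growth t = real t * ln (real t) - (real t - 1) * ln (real t - 1)"

lemma tree_growth_pos:
  assumes "2 \<le> t"
  shows "0 < tree_growth t"
proof -
  have "(real t - 1) * ln (real t - 1) \<le> (real t - 1) * ln (real t)"
    using assms by (intro mult_left_mono) auto
  moreover have "0 < ln (real t)" using assms by simp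
  ultimately show ?thesis unfolding tree_growth_def by (simp add: algebra_simps)
qed

lemma ln_T_le:
  assumes "2 \<le> t" "1 \<le> k"
  shows "ln (T t p) \<le> ln (real t / (real t - 1)) + tree_growth t * (real p / real k + real t ^ k)"
proof -
  \<comment> \<open>\<open>\<rho>\<close> is the radius of convergence of the generating function \<open>F = 1 + z F^t\<close> of t-ary trees
    and \<open>\<tau> = F \<rho>\<close>.\<close>
  define \<rho> where "\<rho> = (real t - 1) ^ (t - 1) / real t ^ t"
  define \<tau> where "\<tau> = real t / (real t - 1)"
  define N where "N = p div k + t ^ k"
  have t1: "1 < real t" using assms(1) by simp
  have \<rho>_pos: "0 < \<rho>" unfolding \<rho>_def using t1 by simp
  have ln_\<rho>: "ln \<rho> = - tree_growth t"
    using t1 assms(1) by (simp add: \<rho>_def tree_growth_def ln_div ln_realpow of_nat_diff)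
  have "\<rho> \<le> 1" using ln_\<rho> tree_growth_pos[OF assms(1)] \<rho>_pos by (metis ln_le_zero_iff less_imp_le neg_le_0_iff_le)
  have "\<rho> * \<tau> ^ t = (real t - 1) ^ (t - 1) / (real t - 1) ^ Suc (t - 1)"
    using t1 by (simp add: \<rho>_def \<tau>_def power_divide del: power_Suc)
  also have "\<dots> = 1 / (real t - 1)" using t1 by (subst power_Suc) simp
  finally have "\<rho> * \<tau> ^ t = 1 / (real t - 1)" .
  moreover have "1 + 1 / (real t - 1) = \<tau>" using t1 by (simp add: \<tau>_def field_simps)
  ultimately have \<tau>_fixed: "1 + \<rho> * \<tau> ^ t = \<tau>" by simp
  have "\<tau> \<ge> 1" using t1 by (simp add: \<tau>_def)
  have "T t p * \<rho> ^ N \<le> card (trees_upto t N) * \<rho> ^ N"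
    using T_le_card_trees_upto[OF assms] \<rho>_pos by (simp add: N_def)
  also have "\<dots> \<le> \<tau>"
    using card_trees_upto_le \<rho>_pos \<open>\<rho> \<le> 1\<close> \<open>\<tau> \<ge> 1\<close> \<tau>_fixed by simp
  finally have bound: "T t p * \<rho> ^ N \<le> \<tau>" .
  have "real N \<le> real p / real k + real t ^ k"
    unfolding N_def using of_nat_div_le_of_nat[of p k] by simp
  then have N_le: "tree_growth t * N \<le> tree_growth t * (real p / real k + real t ^ k)"
    using tree_growth_pos[OF assms(1)] by (intro mult_left_mono) auto
  show ?thesis
  proof (cases "T t p = 0")
    case False
    then have "ln (T t p) - tree_growth t * N \<le> ln \<tau>"
      using bound \<rho>_pos \<open>\<tau> \<ge> 1\<close>
      by (subst (asm) ln_le_cancel_iff[symmetric]) (auto simp: ln_mult ln_realpow ln_\<rho> mult.commute)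
    then show ?thesis using N_le by (simp add: \<tau>_def)
  qed (use N_le \<open>\<tau> \<ge> 1\<close> tree_growth_pos[OF assms(1)] in \<open>simp add: \<tau>_def\<close>)
qed

section \<open>Lower bound\<close>

definition lists_with_trues :: "nat \<Rightarrow> nat \<Rightarrow> bool list set" where
  "lists_with_trues m k = {bs. length bs = m \<and> count_list bs True = k}"

lemma card_lists_with_trues: "card (lists_with_trues m k) = m choose k"
proof -
  have "bij_betw (\<lambda>bs. {i. i < m \<and> bs ! i}) (lists_with_trues m k) {A. A \<subseteq> {0..<m} \<and> card A = k}"
  proof (rule bij_betw_byWitness[where f' = "\<lambda>A. map (\<lambda>i. i \<in> A) [0..<m]"])
    show "\<forall>bs\<in>lists_with_trues m k. map (\<lambda>i. i \<in> {i. i < m \<and> bs ! i}) [0..<m] = bs"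
      by (auto simp: lists_with_trues_def intro: nth_equalityI)
    show "\<forall>A\<in>{A. A \<subseteq> {0..<m} \<and> card A = k}. {i. i < m \<and> map (\<lambda>i. i \<in> A) [0..<m] ! i} = A"
      by auto
    show "(\<lambda>bs. {i. i < m \<and> bs ! i}) ` lists_with_trues m k \<subseteq> {A. A \<subseteq> {0..<m} \<and> card A = k}"
      by (auto simp: lists_with_trues_def count_list_eq_length_filter length_filter_conv_card eq_commute[of True])
    show "(\<lambda>A. map (\<lambda>i. i \<in> A) [0..<m]) ` {A. A \<subseteq> {0..<m} \<and> card A = k} \<subseteq> lists_with_trues m k"
      by (auto simp: lists_with_trues_def count_list_eq_length_filter length_filter_conv_card eq_commute[of True]
          intro!: arg_cong[where f = card])
  qed
  then show ?thesis by (simp add: bij_betw_same_card n_subsets)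
qed

fun fill :: "bool list \<Rightarrow> tree list \<Rightarrow> tree list" where
  "fill [] f = []"
| "fill (False # bs) f = Leaf # fill bs f"
| "fill (True # bs) [] = Leaf # fill bs []"
| "fill (True # bs) (y # f) = y # fill bs f"

lemma length_fill: "length (fill bs f) = length bs"
  by (induction bs f rule: fill.induct) auto

lemma set_fill: "set (fill bs f) \<subseteq> insert Leaf (set f)"
  by (induction bs f rule: fill.induct) auto

lemma sum_list_map_fill:
  assumes "g Leaf = 0" "count_list bs True = length f"
  shows "sum_list (map g (fill bs f)) = sum_list (map g f)"
  using assms(2) by (induction bs f rule: fill.induct) (auto simp: assms(1))

lemma fill_inject:
  assumes "fill bs f = fill bs' f'" "length bs = length bs'"
    "count_list bs True = length f" "count_list bs' True = length f'"
    "Leaf \<notin> set f" "Leaf \<notin> set f'"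
  shows "bs = bs' \<and> f = f'"
  using assms
proof (induction bs f arbitrary: bs' f' rule: fill.induct)
  case (2 bs f)
  then show ?case by (cases bs'; cases "hd bs'"; cases f') auto
next
  case (4 bs y f)
  then show ?case by (cases bs'; cases "hd bs'"; cases f') auto
qed auto

fun chunks :: "nat \<Rightarrow> nat \<Rightarrow> 'a list \<Rightarrow> 'a list list" where
  "chunks t 0 xs = []"
| "chunks t (Suc m) xs = take t xs # chunks t m (drop t xs)"

lemma length_chunks: "length (chunks t m xs) = m"
  by (induction m arbitrary: xs) auto

lemma concat_chunks: "length xs = t * m \<Longrightarrow> concat (chunks t m xs) = xs"
  by (induction m arbitrary: xs) auto

lemma length_mem_chunks: "length xs = t * m \<Longrightarrow> c \<in> set (chunks t m xs) \<Longrightarrow> length c = t"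
proof (induction m arbitrary: xs)
  case (Suc m)
  then show ?case by (auto intro: Suc.IH[of "drop t xs"])
qed simp

definition first_width :: "nat list \<Rightarrow> nat" where
  "first_width ns = (case ns of [] \<Rightarrow> 0 | n # _ \<Rightarrow> n)"

lemma first_width_simps [simp]: "first_width [] = 0" "first_width (n # ns) = n"
  by (simp_all add: first_width_def)

(* For a level profile ns = [n_0, n_1, ...], the lists of n_0 non-empty t-ary trees with n_i
   nodes at depth i: the t n_0 child slots of the roots receive the forest of the deeper levels
   at the positions marked True. *)
fun profile_forests :: "nat \<Rightarrow> nat list \<Rightarrow> tree list set" where
  "profile_forests t [] = {[]}"
| "profile_forests t (n # ns) =
    (\<lambda>(bs, f). map Node (chunks t n (fill bs f))) ` (lists_with_trues (t * n) (first_width ns) \<times> profile_forests t ns)"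

(* The sum of i n_i over the profile [n_0, n_1, ...]. *)
fun profile_path_length :: "nat list \<Rightarrow> nat" where
  "profile_path_length [] = 0"
| "profile_path_length (n # ns) = sum_list ns + profile_path_length ns"

fun profile_count :: "nat \<Rightarrow> nat list \<Rightarrow> nat" where
  "profile_count t [] = 1"
| "profile_count t (n # ns) = (t * n choose first_width ns) * profile_count t ns"

lemma sum_list_map_concat:
  "sum_list (map g (concat xss)) = sum_list (map (\<lambda>xs. sum_list (map g xs)) xss)"
  by (induction xss) auto

lemma profile_forests_shape:
  assumes "f \<in> profile_forests t ns"
  shows "length f = first_width ns \<and> (\<forall>y\<in>set f. tary t y \<and> y \<noteq> Leaf)
     \<and> sum_list (map nodes f) = sum_list ns \<and> sum_list (map path_length f) = profile_path_length ns"
  using assms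
proof (induction ns arbitrary: f)
  case (Cons n ns)
  then obtain bs g where f: "f = map Node (chunks t n (fill bs g))"
    and bs: "bs \<in> lists_with_trues (t * n) (first_width ns)" and g: "g \<in> profile_forests t ns"
    by auto
  note IH = Cons.IH[OF g]
  let ?slots = "fill bs g"
  have len: "length ?slots = t * n" using bs by (simp add: lists_with_trues_def length_fill)
  have cnt: "count_list bs True = length g" using bs IH by (simp add: lists_with_trues_def)
  have "tary t y \<and> y \<noteq> Leaf" if y: "y \<in> set f" for y
  proof -
    obtain c where c: "c \<in> set (chunks t n ?slots)" "y = Node c" using y f by auto
    have "set c \<subseteq> set (concat (chunks t n ?slots))" using c(1) by auto
    then have "set c \<subseteq> insert Leaf (set g)" using concat_chunks[OF len] set_fill[of bs g] by auto
    then show ?thesis using c IH length_mem_chunks[OF len] by auto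
  qed
  moreover have "sum_list (map nodes f) = n + sum_list (map nodes ?slots)"
    using concat_chunks[OF len] length_chunks[of t n ?slots]
    by (simp add: f o_def sum_list_Suc flip: sum_list_map_concat)
  moreover have "sum_list (map path_length f) = sum_list (map (\<lambda>s. path_length s + nodes s) ?slots)"
    using concat_chunks[OF len] by (simp add: f o_def flip: sum_list_map_concat)
  moreover have "sum_list (map nodes ?slots) = sum_list (map nodes g)"
    by (rule sum_list_map_fill[OF _ cnt]) simp
  moreover have "sum_list (map (\<lambda>s. path_length s + nodes s) ?slots) = sum_list (map (\<lambda>s. path_length s + nodes s) g)"
    by (rule sum_list_map_fill[OF _ cnt]) simp
  ultimately show ?case using IH by (simp add: f length_chunks sum_list_addf)
qed simp

lemma card_profile_forests: "card (profile_forests t ns) = profile_count t ns"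
proof (induction ns)
  case (Cons n ns)
  let ?build = "\<lambda>(bs, f). map Node (chunks t n (fill bs f))"
  have "inj_on ?build (lists_with_trues (t * n) (first_width ns) \<times> profile_forests t ns)"
  proof (rule inj_onI, clarify)
    fix bs f bs' f'
    assume bs: "bs \<in> lists_with_trues (t * n) (first_width ns)" "bs' \<in> lists_with_trues (t * n) (first_width ns)"
      and f: "f \<in> profile_forests t ns" "f' \<in> profile_forests t ns"
      and eq: "map Node (chunks t n (fill bs f)) = map Node (chunks t n (fill bs' f'))"
    have "length (fill bs f) = t * n" "length (fill bs' f') = t * n"
      using bs by (auto simp: lists_with_trues_def length_fill)
    moreover have "chunks t n (fill bs f) = chunks t n (fill bs' f')"
      using eq by (simp add: inj_map_eq_map inj_on_def)
    ultimately have "fill bs f = fill bs' f'" by (metis concat_chunks)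
    then show "bs = bs' \<and> f = f'"
      using bs profile_forests_shape[OF f(1)] profile_forests_shape[OF f(2)]
      by (intro fill_inject) (auto simp: lists_with_trues_def)
  qed
  then show ?case
    using Cons by (simp add: card_image card_cartesian_product card_lists_with_trues)
qed simp

lemma profile_count_le_T:
  assumes "2 \<le> t"
  shows "profile_count t (1 # ns) \<le> T t (profile_path_length (1 # ns))"
proof -
  let ?S = "{x. tary t x \<and> x \<noteq> Leaf \<and> path_length x = profile_path_length (1 # ns)}"
  have single: "\<exists>y. f = [y] \<and> y \<in> ?S" if "f \<in> profile_forests t (1 # ns)" for f
  proof -
    have shape: "length f = 1" "\<forall>y\<in>set f. tary t y \<and> y \<noteq> Leaf"
      "sum_list (map path_length f) = profile_path_length (1 # ns)"
      using profile_forests_shape[OF that] by simp_all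
    then obtain y where "f = [y]" by (cases f) auto
    then show ?thesis using shape by simp
  qed
  have "inj_on hd (profile_forests t (1 # ns))"
  proof (rule inj_onI)
    fix f g assume "f \<in> profile_forests t (1 # ns)" "g \<in> profile_forests t (1 # ns)" "hd f = hd g"
    then show "f = g" using single by fastforce
  qed
  then have "profile_count t (1 # ns) = card (hd ` profile_forests t (1 # ns))"
    by (simp only: card_image card_profile_forests)
  also have "\<dots> \<le> card ?S"
    using single by (intro card_mono[OF finite_path_length_trees[OF assms]]) fastforce
  finally show ?thesis unfolding T_def .
qed

fun admissible :: "nat \<Rightarrow> nat list \<Rightarrow> bool" where
  "admissible t (n # m # ns) = (m \<le> t * n \<and> admissible t (m # ns))"
| "admissible t _ = True"

lemma admissible_Cons: "admissible t (n # ns) \<longleftrightarrow> first_width ns \<le> t * n \<and> admissible t ns"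
  by (cases ns) auto

lemma admissible_append:
  assumes "admissible t xs" "admissible t ys" "xs \<noteq> [] \<Longrightarrow> ys \<noteq> [] \<Longrightarrow> hd ys \<le> t * last xs"
  shows "admissible t (xs @ ys)"
  using assms by (induction xs rule: admissible.induct) (auto simp: admissible_Cons first_width_def split: list.splits)

lemma admissible_replicate: "1 \<le> t \<Longrightarrow> admissible t (replicate n w)"
proof (induction n)
  case (Suc n)
  then show ?case by (cases n) auto
qed simp

lemma profile_count_pos: "admissible t ns \<Longrightarrow> 0 < profile_count t ns"
  by (induction ns) (auto simp: admissible_Cons)

lemma profile_count_append_mono: "admissible t (xs @ ys) \<Longrightarrow> profile_count t ys \<le> profile_count t (xs @ ys)"
proof (induction xs)
  case (Cons x xs)
  let ?C = "t * x choose first_width (xs @ ys)"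
  have "1 \<le> ?C" "admissible t (xs @ ys)" using Cons.prems by (auto simp: admissible_Cons Suc_le_eq)
  have "profile_count t ys \<le> profile_count t (xs @ ys)" using Cons by (simp add: admissible_Cons)
  also have "\<dots> \<le> ?C * profile_count t (xs @ ys)" using mult_le_mono1[OF \<open>1 \<le> ?C\<close>] by simp
  finally show ?case by simp
qed simp

lemma profile_count_replicate_ge:
  "admissible t (replicate (Suc L) w @ ns) \<Longrightarrow> (t * w choose w) ^ L \<le> profile_count t (replicate (Suc L) w @ ns)"
proof (induction L)
  case 0
  then show ?case by (auto simp: admissible_Cons Suc_le_eq intro: profile_count_pos)
next
  case (Suc L)
  then show ?case by (simp add: admissible_Cons)
qed

(* The terms of the expansion of (1 + (t - 1))^(t W) increase up to index W and decrease after it. *)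
lemma binomial_term_le_central:
  assumes "2 \<le> t" "i \<le> t * W"
  shows "(t * W choose i) * (t - 1) ^ (t * W - i) \<le> (t * W choose W) * (t - 1) ^ (t * W - W)"
proof -
  define m where "m = t * W"
  define a where "a i = (m choose i) * (t - 1) ^ (m - i)" for i
  have ratio: "a (Suc i) * (Suc i * (t - 1)) = a i * (m - i)" if "i < m" for i
  proof -
    have "(t - 1) ^ (m - i) = (t - 1) * (t - 1) ^ (m - Suc i)"
      using that by (simp add: Suc_diff_Suc flip: power_Suc)
    moreover have "Suc i * (m choose Suc i) = (m - i) * (m choose i)"
      using binomial_absorption[of i m] binomial_absorb_comp[of m i] by simp
    ultimately show ?thesis unfolding a_def by (metis mult.assoc mult.commute mult.left_commute)
  qed
  have up: "a i \<le> a (Suc i)" if "i < W" for i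
  proof -
    have "W \<le> m" using assms(1) by (simp add: m_def)
    then have "i < m" using that by simp
    have "Suc i * (t - 1) + i < t * Suc i" using assms(1) by (cases t) auto
    also have "t * Suc i \<le> m" using that unfolding m_def by (intro mult_le_mono2) simp
    finally have "Suc i * (t - 1) \<le> m - i" by linarith
    then have "a i * (Suc i * (t - 1)) \<le> a i * (m - i)" by (rule mult_le_mono2)
    also have "\<dots> = a (Suc i) * (Suc i * (t - 1))" using ratio[OF \<open>i < m\<close>] by simp
    finally show ?thesis using assms(1) by simp
  qed
  have down: "a (Suc i) \<le> a i" if "W \<le> i" "i < m" for i
  proof -
    have "m \<le> i * t" using that(1) by (simp add: m_def mult.commute)
    then have "m - i \<le> i * (t - 1)" by (simp add: diff_mult_distrib2)
    then have "a (Suc i) * (m - i) \<le> a (Suc i) * (Suc i * (t - 1))" by simp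
    also have "\<dots> = a i * (m - i)" by (rule ratio[OF that(2)])
    finally show ?thesis using that(2) by simp
  qed
  have below: "a (W - j) \<le> a W" for j
  proof (induction j)
    case (Suc j)
    show ?case
    proof (cases "j < W")
      case True
      then have "a (W - Suc j) \<le> a (Suc (W - Suc j))" by (intro up) simp
      with True Suc show ?thesis by (simp add: Suc_diff_Suc)
    qed (use Suc in simp)
  qed simp
  have above: "a (W + j) \<le> a W" if "W + j \<le> m" for j
    using that by (induction j) (auto intro: order_trans[OF down])
  show ?thesis
    using below[of "W - i"] above[of "i - W"] assms(2) unfolding a_def m_def
    by (cases "i \<le> W") simp_all
qed

lemma power_le_central_binomial:
  assumes "2 \<le> t"
  shows "t ^ (t * W) \<le> (t * W + 1) * ((t * W choose W) * (t - 1) ^ (t * W - W))"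
proof -
  have "t ^ (t * W) = (1 + (t - 1)) ^ (t * W)" using assms by simp
  also have "\<dots> = (\<Sum>i\<le>t * W. (t * W choose i) * (t - 1) ^ (t * W - i))"
    unfolding binomial by simp
  also have "\<dots> \<le> (\<Sum>i\<le>t * W. (t * W choose W) * (t - 1) ^ (t * W - W))"
    using binomial_term_le_central[OF assms] by (intro sum_mono) simp
  finally show ?thesis by simp
qed

lemma ln_binomial_ge:
  assumes "2 \<le> t"
  shows "tree_growth t * W - ln (real t * W + 1) \<le> ln (t * W choose W)"
proof -
  have t1: "1 < real t" using assms by simp
  have C_pos: "0 < (t * W choose W)" using assms by simp
  have W_pos: "0 < real t * W + 1" by (intro add_nonneg_pos) simp_all
  have "real (t ^ (t * W)) \<le> real ((t * W + 1) * ((t * W choose W) * (t - 1) ^ (t * W - W)))"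
    using power_le_central_binomial[OF assms, of W] by (simp only: of_nat_le_iff)
  then have "real t ^ (t * W) \<le> (real t * W + 1) * ((t * W choose W) * (real t - 1) ^ (t * W - W))"
    using assms by (simp add: of_nat_diff algebra_simps)
  then have "ln (real t ^ (t * W)) \<le> ln ((real t * W + 1) * ((t * W choose W) * (real t - 1) ^ (t * W - W)))"
    using t1 C_pos W_pos by (subst ln_le_cancel_iff) auto
  also have "\<dots> = ln (real t * W + 1) + ln (t * W choose W) + real (t * W - W) * ln (real t - 1)"
    using t1 C_pos W_pos by (simp add: ln_mult ln_realpow)
  finally show ?thesis
    using assms by (simp add: tree_growth_def ln_realpow of_nat_diff algebra_simps)
qed

lemma profile_path_length_append:
  "profile_path_length (xs @ ys) = profile_path_length xs + profile_path_length ys + length xs * sum_list ys"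
  by (induction xs) (auto simp: algebra_simps)

lemma profile_path_length_le: "profile_path_length ns \<le> length ns * sum_list ns"
proof (induction ns)
  case (Cons n ns)
  have "profile_path_length (n # ns) \<le> Suc (length ns) * sum_list ns" using Cons by simp
  also have "\<dots> \<le> Suc (length ns) * (n + sum_list ns)" by (rule mult_le_mono2) simp
  finally show ?case by simp
qed simp

definition plateau_profile :: "nat \<Rightarrow> nat \<Rightarrow> nat \<Rightarrow> nat list" where
  "plateau_profile t D L = map (\<lambda>j. t ^ j) [0..<D] @ replicate (Suc L) (t ^ D)"

lemma length_plateau_profile: "length (plateau_profile t D L) = D + L + 1"
  by (simp add: plateau_profile_def)

lemma plateau_profile_Suc: "plateau_profile t D (Suc L) = plateau_profile t D L @ [t ^ D]"
  by (simp add: plateau_profile_def replicate_append_same)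

lemma admissible_powers: "admissible t (map (\<lambda>j. t ^ j) [0..<n])"
proof (induction n)
  case (Suc n)
  have "t ^ n \<le> t * last (map (\<lambda>j. t ^ j) [0..<n])" if "n \<noteq> 0"
    using that by (cases n) (simp_all add: last_map)
  then show ?case
    unfolding upt_Suc_append[OF le0] map_append using Suc.IH by (intro admissible_append) auto
qed simp

lemma admissible_plateau_profile:
  assumes "1 \<le> t"
  shows "admissible t (plateau_profile t D L)"
  unfolding plateau_profile_def
proof (rule admissible_append[OF admissible_powers admissible_replicate[OF assms]])
  assume "map (\<lambda>j. t ^ j) [0..<D] \<noteq> []"
  then obtain m where "D = Suc m" by (cases D) auto
  then show "hd (replicate (Suc L) (t ^ D)) \<le> t * last (map (\<lambda>j. t ^ j) [0..<D])"
    by (simp add: last_map)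
qed

lemma sum_list_powers_less: "2 \<le> (t::nat) \<Longrightarrow> sum_list (map (\<lambda>j. t ^ j) [0..<D]) < t ^ D"
proof (induction D)
  case (Suc D)
  then have "sum_list (map (\<lambda>j. t ^ j) [0..<Suc D]) < 2 * t ^ D" by simp
  also have "\<dots> \<le> t ^ Suc D" using Suc.prems by simp
  finally show ?case .
qed simp

lemma plateau_path_length_ge: "D * L * t ^ D \<le> profile_path_length (plateau_profile t D L)"
proof -
  have "D * L * t ^ D \<le> D * sum_list (replicate (Suc L) (t ^ D))" by (simp add: sum_list_replicate)
  also have "\<dots> \<le> profile_path_length (plateau_profile t D L)"
    by (simp add: plateau_profile_def profile_path_length_append)
  finally show ?thesis .
qed

lemma plateau_path_length_le:
  assumes "2 \<le> t"
  shows "profile_path_length (plateau_profile t D L) \<le> (D + L + 1) * ((L + 2) * t ^ D)"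
proof -
  have "sum_list (plateau_profile t D L) \<le> (L + 2) * t ^ D"
    using sum_list_powers_less[OF assms, of D] by (simp add: plateau_profile_def sum_list_replicate)
  then have "(D + L + 1) * sum_list (plateau_profile t D L) \<le> (D + L + 1) * ((L + 2) * t ^ D)"
    by (rule mult_le_mono2)
  then show ?thesis
    using profile_path_length_le[of "plateau_profile t D L"] by (simp add: length_plateau_profile)
qed

lemma plateau_path_length_Suc:
  "profile_path_length (plateau_profile t D (Suc L)) = profile_path_length (plateau_profile t D L) + (D + L + 1) * t ^ D"
  by (simp add: plateau_profile_Suc profile_path_length_append length_plateau_profile)

lemma exists_crossing:
  fixes f :: "nat \<Rightarrow> nat"
  assumes "f 0 \<le> p" "p < f n"
  shows "\<exists>L<n. f L \<le> p \<and> p < f (Suc L)"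
  using assms(2)
proof (induction n)
  case (Suc n)
  show ?case
  proof (cases "p < f n")
    case True
    then obtain L where "L < n" "f L \<le> p" "p < f (Suc L)" using Suc.IH by blast
    then show ?thesis by (intro exI[of _ L]) simp
  next
    case False
    then show ?thesis using Suc.prems by (intro exI[of _ n]) simp
  qed
qed (use assms(1) in simp)

lemma two_level_split:
  fixes d w R :: nat
  assumes "1 \<le> d" "2 * d * d \<le> R" "R < 2 * w * d"
  shows "\<exists>a b. a * d + b * (d + 1) = R \<and> a < 2 * w \<and> b \<le> a"
proof -
  define q r where "q = R div d" and "r = R mod d"
  have "2 * d \<le> q" using div_le_mono[OF assms(2), of d] assms(1) by (simp add: q_def)
  moreover have "q < 2 * w" using assms(1,3) by (simp add: q_def less_mult_imp_div_less)
  moreover have "r < d" using assms(1) by (simp add: r_def)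
  moreover have "q * d + r = R" by (simp add: q_def r_def)
  ultimately have "r \<le> q" "q - r < 2 * w" "r \<le> q - r" "q * d + r = R" by linarith+
  moreover have "(q - r) * d + r * d = q * d"
    using \<open>r \<le> q\<close> by (metis add_mult_distrib le_add_diff_inverse2)
  ultimately have "(q - r) * d + r * (d + 1) = R \<and> q - r < 2 * w \<and> r \<le> q - r" by simp
  then show ?thesis by blast
qed

(* The plateau profile followed by two levels of widths a and b, which absorb the remainder
   R = a d + b (d + 1) of the path length. *)
lemma T_ge_plateau_power:
  fixes t D L p :: nat
  defines "d \<equiv> D + L + 1"
  assumes t: "2 \<le> t" and D: "1 \<le> D" and wide: "8 * d \<le> t ^ D"
    and lo: "profile_path_length (plateau_profile t D L) + 2 * d * d \<le> p"
    and hi: "p < profile_path_length (plateau_profile t D L) + t ^ D * d + 2 * (d + 1) * (d + 1)"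
  shows "(t * t ^ D choose t ^ D) ^ L \<le> T t p"
proof -
  define W where "W = t ^ D"
  define R where "R = p - profile_path_length (plateau_profile t D L)"
  have R_ge: "2 * d * d \<le> R" using lo by (simp add: R_def)
  have "R < W * d + 2 * (d + 1) * (d + 1)" using lo hi by (simp add: R_def W_def)
  also have "2 * (d + 1) * (d + 1) \<le> W * d"
    using mult_le_mono1[OF wide, of d] by (simp add: d_def W_def algebra_simps)
  finally have "R < 2 * W * d" by simp
  then obtain a b where ab: "a * d + b * (d + 1) = R" "a < 2 * W" "b \<le> a"
    using two_level_split[OF _ R_ge \<open>R < 2 * W * d\<close>] by (auto simp: d_def)
  define ns where "ns = plateau_profile t D L @ [a, b]"
  have "2 * W \<le> t * W" "1 * a \<le> t * a" using t by (intro mult_le_mono1; simp)+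
  then have "a \<le> t * W" "b \<le> t * a" using ab by linarith+
  then have adm_ab: "admissible t [a, b]" by simp
  have adm_tail: "admissible t (replicate (Suc L) W @ [a, b])"
    using t \<open>a \<le> t * W\<close> by (intro admissible_append[OF admissible_replicate adm_ab]) auto
  have adm_ns: "admissible t ns"
    unfolding ns_def using t \<open>a \<le> t * W\<close>
    by (intro admissible_append[OF admissible_plateau_profile adm_ab]) (auto simp: plateau_profile_def W_def)
  have "(t * W choose W) ^ L \<le> profile_count t ns"
    using profile_count_replicate_ge[OF adm_tail] profile_count_append_mono[of t "map (\<lambda>j. t ^ j) [0..<D]"] adm_ns
    by (fastforce simp: ns_def plateau_profile_def W_def)
  also obtain ns' where "ns = 1 # ns'"
    using D by (cases D) (auto simp: ns_def plateau_profile_def upt_rec)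
  then have "profile_count t ns \<le> T t (profile_path_length ns)"
    using profile_count_le_T[OF t] by simp
  also have "profile_path_length ns = p"
    using ab(1) lo by (simp add: ns_def R_def d_def profile_path_length_append length_plateau_profile algebra_simps)
  finally show ?thesis by (simp add: W_def)
qed

lemma exists_plateau_profile:
  assumes t: "2 \<le> t" and D: "1 \<le> D"
    and p_ge: "(D + 1) * (2 * t ^ D) + 2 * (D + 1)^2 \<le> p"
    and wide: "8 * (D + p div (D * t ^ D) + 1) \<le> t ^ D"
  shows "\<exists>L. D * L * t ^ D \<le> p \<and> p < (D + L + 2) * ((L + 3) * t ^ D) + 2 * (D + L + 2)^2
            \<and> (t * t ^ D choose t ^ D) ^ L \<le> T t p"
proof -
  define f where "f L = profile_path_length (plateau_profile t D L) + 2 * (D + L + 1)^2" for L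
  have "f 0 \<le> (D + 0 + 1) * ((0 + 2) * t ^ D) + 2 * (D + 0 + 1)^2"
    unfolding f_def using plateau_path_length_le[OF t, of D 0] by (rule add_right_mono)
  also have "\<dots> = (D + 1) * (2 * t ^ D) + 2 * (D + 1)^2" by simp
  also note p_ge
  finally have "f 0 \<le> p" .
  moreover have "p < f (Suc p)" by (simp add: f_def power2_eq_square)
  ultimately obtain L where L: "f L \<le> p" "p < f (Suc L)" using exists_crossing[of f p] by blast
  have DLW: "D * L * t ^ D \<le> p" using plateau_path_length_ge[of D L t] L(1) by (simp add: f_def)
  then have "L * (D * t ^ D) \<le> p" by (simp add: ac_simps)
  then have "L \<le> p div (D * t ^ D)" using D t by (simp add: less_eq_div_iff_mult_less_eq)
  then have "8 * (D + L + 1) \<le> t ^ D" using wide by simp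
  moreover have "profile_path_length (plateau_profile t D L) + 2 * (D + L + 1) * (D + L + 1) \<le> p"
    using L(1) by (simp add: f_def power2_eq_square algebra_simps)
  moreover have "p < profile_path_length (plateau_profile t D L) + t ^ D * (D + L + 1) + 2 * (D + L + 1 + 1) * (D + L + 1 + 1)"
    using L(2) by (simp add: f_def plateau_path_length_Suc power2_eq_square algebra_simps)
  ultimately have "(t * t ^ D choose t ^ D) ^ L \<le> T t p"
    using T_ge_plateau_power[OF t D] by blast
  moreover have "f (Suc L) \<le> (D + Suc L + 1) * ((Suc L + 2) * t ^ D) + 2 * (D + Suc L + 1)^2"
    unfolding f_def using plateau_path_length_le[OF t, of D "Suc L"] by (rule add_right_mono)
  then have "p < (D + L + 2) * ((L + 3) * t ^ D) + 2 * (D + L + 2)^2"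
    using L(2) by (simp add: algebra_simps)
  ultimately show ?thesis using DLW by blast
qed

lemma plateau_size_ge:
  fixes D L W p :: nat and \<Lambda> :: real
  assumes L_le: "real L \<le> \<Lambda>" and p_lt: "p < (D + L + 2) * ((L + 3) * W) + 2 * (D + L + 2)^2"
  shows "p / (D + \<Lambda> + 2) - 3 * real W - 2 * (D + \<Lambda> + 2) \<le> real L * real W"
proof -
  define Z where "Z = real D + real L + 2"
  have Z_pos: "0 < Z" by (simp add: Z_def)
  have "real p < real ((D + L + 2) * ((L + 3) * W) + 2 * (D + L + 2)^2)"
    using p_lt by (simp only: of_nat_less_iff)
  then have "real p < Z * ((real L + 3) * W) + 2 * Z^2" by (simp add: Z_def algebra_simps)
  then have "p / Z < (real L + 3) * W + 2 * Z"
    using Z_pos by (simp add: field_simps power2_eq_square)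
  moreover have "p / (D + \<Lambda> + 2) \<le> p / Z" and "Z \<le> D + \<Lambda> + 2"
    using L_le Z_pos by (auto simp: Z_def intro!: divide_left_mono)
  ultimately show ?thesis by (simp add: algebra_simps)
qed

lemma plateau_bound_antimono:
  fixes K \<Lambda> x c D Y W V :: real
  assumes "0 \<le> K" "0 \<le> \<Lambda>" "0 \<le> x" "0 \<le> D" "D \<le> Y" "0 < W" "W \<le> V" "0 \<le> c"
  shows "K * (x / (Y + \<Lambda> + 2) - 3 * V - 2 * (Y + \<Lambda> + 2)) - \<Lambda> * ln (c * V + 1)
       \<le> K * (x / (D + \<Lambda> + 2) - 3 * W - 2 * (D + \<Lambda> + 2)) - \<Lambda> * ln (c * W + 1)"
proof -
  have "x / (Y + \<Lambda> + 2) \<le> x / (D + \<Lambda> + 2)" using assms by (intro divide_left_mono) auto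
  then have A: "x / (Y + \<Lambda> + 2) - 3 * V - 2 * (Y + \<Lambda> + 2) \<le> x / (D + \<Lambda> + 2) - 3 * W - 2 * (D + \<Lambda> + 2)"
    using assms by (intro diff_mono) auto
  have E: "ln (c * W + 1) \<le> ln (c * V + 1)"
    using assms by (subst ln_le_cancel_iff) (auto intro: add_nonneg_pos mult_left_mono)
  show ?thesis using mult_left_mono[OF A \<open>0 \<le> K\<close>] mult_left_mono[OF E \<open>0 \<le> \<Lambda>\<close>] by linarith
qed

lemma ln_T_ge_plateau:
  fixes p D :: nat and \<Lambda> :: real
  assumes t: "2 \<le> t" and D: "1 \<le> D"
    and \<Lambda>: "real p / (real D * real t ^ D) \<le> \<Lambda>"
    and p_ge: "(D + 1) * (2 * t ^ D) + 2 * (D + 1)^2 \<le> p"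
    and wide: "8 * (D + \<Lambda> + 1) \<le> real t ^ D"
  shows "tree_growth t * (p / (D + \<Lambda> + 2) - 3 * real t ^ D - 2 * (D + \<Lambda> + 2))
           - \<Lambda> * ln (real t * real t ^ D + 1) \<le> ln (T t p)"
proof -
  define W where "W = t ^ D"
  have W_pos: "0 < real W" using t by (simp add: W_def)
  have "real (p div (D * W)) \<le> real p / real (D * W)" by (rule of_nat_div_le_of_nat)
  then have "real (p div (D * W)) \<le> \<Lambda>" using \<Lambda> by (simp add: W_def)
  then have "real (8 * (D + p div (D * W) + 1)) \<le> real W" using wide by (simp add: W_def)
  then have "8 * (D + p div (D * W) + 1) \<le> W" by (simp only: of_nat_le_iff)
  then obtain L where DLW: "D * L * W \<le> p"
    and p_lt: "p < (D + L + 2) * ((L + 3) * W) + 2 * (D + L + 2)^2"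
    and count: "(t * W choose W) ^ L \<le> T t p"
    using exists_plateau_profile[OF t D p_ge] by (auto simp: W_def)
  have L_le: "real L \<le> \<Lambda>"
  proof -
    have "real L * (real D * real W) \<le> p" using DLW by (simp add: algebra_simps flip: of_nat_mult of_nat_le_iff)
    then have "real L \<le> p / (real D * real W)" using D W_pos by (simp add: field_simps)
    then show ?thesis using \<Lambda> by (simp add: W_def)
  qed
  have LW: "p / (D + \<Lambda> + 2) - 3 * real W - 2 * (D + \<Lambda> + 2) \<le> real L * real W"
    by (rule plateau_size_ge[OF L_le p_lt])
  have C_pos: "0 < (t * W choose W)" using t by simp
  then have T_pos: "0 < T t p" using count by (metis less_le_trans zero_less_power)
  have "real L * ln (t * W choose W) = ln (real ((t * W choose W) ^ L))"
    using C_pos by (simp add: ln_realpow)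
  also have "\<dots> \<le> ln (T t p)"
    using count C_pos T_pos by (subst ln_le_cancel_iff) auto
  finally have L_ln_C: "real L * ln (t * W choose W) \<le> ln (T t p)" .
  have "tree_growth t * (p / (D + \<Lambda> + 2) - 3 * real W - 2 * (D + \<Lambda> + 2)) - \<Lambda> * ln (real t * W + 1)
      \<le> tree_growth t * (real L * W) - real L * ln (real t * W + 1)"
    using LW L_le W_pos tree_growth_pos[OF t]
    by (intro diff_mono mult_left_mono mult_right_mono) auto
  also have "\<dots> = real L * (tree_growth t * W - ln (real t * W + 1))" by (simp add: algebra_simps)
  also have "\<dots> \<le> real L * ln (t * W choose W)"
    using ln_binomial_ge[OF t] by (intro mult_left_mono) auto
  finally show ?thesis using L_ln_C by (simp add: W_def)
qed

section \<open>Asymptotics\<close>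

lemma power_floor_log_bounds:
  fixes b z :: real
  assumes "1 < b" "1 \<le> z"
  shows "b ^ nat \<lfloor>log b z\<rfloor> \<le> z" "z < b * b ^ nat \<lfloor>log b z\<rfloor>"
proof -
  have bounds: "b powr real_of_int \<lfloor>log b z\<rfloor> \<le> z \<and> z < b powr (real_of_int \<lfloor>log b z\<rfloor> + 1)"
    using floor_log_eq_powr_iff[of z b "\<lfloor>log b z\<rfloor>"] assms by simp
  have "0 \<le> \<lfloor>log b z\<rfloor>" using assms by simp
  then have "b powr real_of_int \<lfloor>log b z\<rfloor> = b ^ nat \<lfloor>log b z\<rfloor>"
    using assms by (simp flip: powr_realpow)
  then show "b ^ nat \<lfloor>log b z\<rfloor> \<le> z" "z < b * b ^ nat \<lfloor>log b z\<rfloor>"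
    using bounds assms by (simp_all add: powr_add mult.commute)
qed

definition upper_ln_T :: "nat \<Rightarrow> real \<Rightarrow> real" where
  "upper_ln_T t x = (let y = log (real t) (x / (ln x)^2)
     in ln (real t / (real t - 1)) + tree_growth t * (x / (y - 1) + x / (ln x)^2))"

lemma ln_T_le_upper_ln_T:
  assumes t: "2 \<le> t" and ln_p: "1 < ln (real p)" and y: "2 \<le> log (real t) (real p / (ln (real p))^2)"
  shows "ln (T t p) \<le> upper_ln_T t p"
proof -
  define z where "z = real p / (ln (real p))^2"
  define k where "k = nat \<lfloor>log (real t) z\<rfloor>"
  have t1: "1 < real t" using t by simp
  have "p \<noteq> 0" using ln_p by (intro notI) simp
  then have "0 < z" using ln_p unfolding z_def by (intro divide_pos_pos) auto
  moreover have "0 \<le> log (real t) z" using y by (simp add: z_def)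
  ultimately have "1 \<le> z" using t1 by simp
  then have tk: "real t ^ k \<le> z" using power_floor_log_bounds[OF t1] by (simp add: k_def)
  have "real k = \<lfloor>log (real t) z\<rfloor>" using y by (simp add: k_def z_def)
  then have "log (real t) z - 1 < real k" by simp
  then have "1 \<le> k" and pk: "real p / real k \<le> real p / (log (real t) z - 1)"
    using y by (auto simp: z_def intro!: divide_left_mono)
  have "tree_growth t * (real p / real k + real t ^ k) \<le> tree_growth t * (real p / (log (real t) z - 1) + z)"
    using pk tk tree_growth_pos[OF t] by (intro mult_left_mono) auto
  then show ?thesis
    using ln_T_le[OF t \<open>1 \<le> k\<close>, of p] by (simp add: upper_ln_T_def Let_def z_def)
qed

(* With D = floor y, the plateau width t^D lies in (x / (t s), x / s] and \<Lambda> bounds the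
   number of plateau levels. *)
definition lower_ln_T :: "nat \<Rightarrow> real \<Rightarrow> real" where
  "lower_ln_T t x = (let s = ln x * sqrt (ln x); y = log (real t) (x / s); \<Lambda> = real t * s / (y - 1)
     in tree_growth t * (x / (y + \<Lambda> + 2) - 3 * (x / s) - 2 * (y + \<Lambda> + 2)) - \<Lambda> * ln (real t * (x / s) + 1))"

lemma ln_T_ge_lower_ln_T:
  fixes t p :: nat
  defines "x \<equiv> real p"
  defines "s \<equiv> ln x * sqrt (ln x)"
  defines "y \<equiv> log (real t) (x / s)"
  defines "\<Lambda> \<equiv> real t * s / (y - 1)"
  assumes t: "2 \<le> t" and ln_x: "1 < ln x" and y: "2 \<le> y"
    and small: "(y + 1) * (2 * x / s) + 2 * (y + 1)^2 \<le> x"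
    and wide: "8 * (y + \<Lambda> + 1) \<le> x / (real t * s)"
  shows "lower_ln_T t x \<le> ln (T t p)"
proof -
  define D where "D = nat \<lfloor>y\<rfloor>"
  define W where "W = real t ^ D"
  have t1: "1 < real t" using t by simp
  have "1 < sqrt (ln x)" using ln_x by simp
  then have s1: "1 < s" using ln_x by (simp add: s_def less_1_mult)
  have "p \<noteq> 0" using ln_x by (intro notI) (simp add: x_def)
  then have x_pos: "0 < x" by (simp add: x_def)
  have "0 \<le> log (real t) (x / s)" using y by (simp add: y_def)
  then have "1 \<le> x / s" using t1 s1 x_pos by simp
  then have W_le: "W \<le> x / s" and "x / s < real t * W"
    using power_floor_log_bounds[OF t1] by (simp_all add: W_def D_def y_def)
  then have W_gt: "x / (real t * s) < W" using t1 s1 by (simp add: field_simps)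
  have W_pos: "0 < W" using t1 by (simp add: W_def)
  have Dy: "real D \<le> y" "y - 1 < real D" "1 \<le> D" using y by (simp_all add: D_def) linarith+
  have \<Lambda>_pos: "0 \<le> \<Lambda>" using s1 y by (simp add: \<Lambda>_def)
  have "(y - 1) * (x / (real t * s)) \<le> real D * W"
    using Dy W_gt y x_pos s1 t1 by (intro mult_mono) auto
  then have \<Lambda>_ge: "real p / (real D * real t ^ D) \<le> \<Lambda>"
    using Dy W_pos y s1 t1 by (simp add: \<Lambda>_def x_def W_def field_simps)
  have "real ((D + 1) * (2 * t ^ D) + 2 * (D + 1)^2) = (real D + 1) * (2 * W) + 2 * (real D + 1)^2"
    by (simp add: W_def algebra_simps)
  also have "\<dots> \<le> (y + 1) * (2 * x / s) + 2 * (y + 1)^2"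
    using Dy W_le W_pos by (intro add_mono mult_mono power_mono) auto
  also note small
  finally have p_ge: "(D + 1) * (2 * t ^ D) + 2 * (D + 1)^2 \<le> p" by (simp only: x_def of_nat_le_iff)
  have wide': "8 * (D + \<Lambda> + 1) \<le> real t ^ D" using Dy wide W_gt by (simp add: W_def)
  have "lower_ln_T t x = tree_growth t * (x / (y + \<Lambda> + 2) - 3 * (x / s) - 2 * (y + \<Lambda> + 2))
      - \<Lambda> * ln (real t * (x / s) + 1)"
    by (simp add: lower_ln_T_def Let_def s_def y_def \<Lambda>_def)
  also have "\<dots> \<le> tree_growth t * (x / (D + \<Lambda> + 2) - 3 * W - 2 * (D + \<Lambda> + 2)) - \<Lambda> * ln (real t * W + 1)"
    using tree_growth_pos[OF t] \<Lambda>_pos x_pos Dy W_pos W_le by (intro plateau_bound_antimono) auto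
  also have "\<dots> \<le> ln (T t p)"
    using ln_T_ge_plateau[OF t Dy(3) \<Lambda>_ge p_ge wide'] by (simp add: W_def x_def)
  finally show ?thesis .
qed

lemma upper_ln_T_asymptotic:
  assumes "2 \<le> t"
  shows "((\<lambda>x. upper_ln_T t x / (tree_growth t * ln t * x / ln x)) \<longlongrightarrow> 1) at_top"
proof -
  have "((\<lambda>x. (a + K * (x / (ln (x / (ln x)^2) / c - 1) + x / (ln x)^2)) / (K * c * x / ln x)) \<longlongrightarrow> 1) at_top"
    if "0 < c" "0 < K" for a c K :: real
    using that by (real_asymp simp add: field_simps)
  from this[of "ln t" "tree_growth t"] show ?thesis
    using assms tree_growth_pos[OF assms] by (simp add: upper_ln_T_def Let_def log_def)
qed

lemma lower_ln_T_asymptotic: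
  assumes "2 \<le> t"
  shows "((\<lambda>x. lower_ln_T t x / (tree_growth t * ln t * x / ln x)) \<longlongrightarrow> 1) at_top"
proof -
  \<comment> \<open>The definition unfolded, with \<open>ln t\<close>, \<open>tree_growth t\<close> and \<open>t\<close> abstracted to positive constants.\<close>
  have "((\<lambda>x. (K * (x / (ln (x / (ln x * sqrt (ln x))) / c + \<tau> * (ln x * sqrt (ln x)) / (ln (x / (ln x * sqrt (ln x))) / c - 1) + 2)
      - 3 * (x / (ln x * sqrt (ln x)))
      - 2 * (ln (x / (ln x * sqrt (ln x))) / c + \<tau> * (ln x * sqrt (ln x)) / (ln (x / (ln x * sqrt (ln x))) / c - 1) + 2))
      - \<tau> * (ln x * sqrt (ln x)) / (ln (x / (ln x * sqrt (ln x))) / c - 1) * ln (\<tau> * (x / (ln x * sqrt (ln x))) + 1))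
      / (K * c * x / ln x)) \<longlongrightarrow> 1) at_top"
    if "0 < c" "0 < K" "0 < \<tau>" for c K \<tau> :: real
    using that by (real_asymp simp add: field_simps)
  from this[of "ln t" "tree_growth t" "real t"] show ?thesis
    using assms tree_growth_pos[OF assms] by (simp add: lower_ln_T_def Let_def log_def)
qed

lemma eventually_ln_T_bounds:
  assumes t: "2 \<le> t"
  shows "\<forall>\<^sub>F p in sequentially. lower_ln_T t p \<le> ln (T t p) \<and> ln (T t p) \<le> upper_ln_T t p"
proof -
  define c where "c = ln (real t)"
  have c: "0 < c" "0 < real t" using t by (simp_all add: c_def)
  let ?s = "\<lambda>x::real. ln x * sqrt (ln x)"
  let ?y = "\<lambda>x. ln (x / ?s x) / c"
  have "\<forall>\<^sub>F x in at_top. 1 < ln (x::real)" by real_asymp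
  moreover have "\<forall>\<^sub>F x in at_top. 2 \<le> ?y x" using c by real_asymp
  moreover have "\<forall>\<^sub>F x in at_top. (?y x + 1) * (2 * x / ?s x) + 2 * (?y x + 1)^2 \<le> x"
    using c by real_asymp
  moreover have "\<forall>\<^sub>F x in at_top. 8 * (?y x + real t * ?s x / (?y x - 1) + 1) \<le> x / (real t * ?s x)"
    using c by real_asymp
  moreover have "\<forall>\<^sub>F x in at_top. 2 \<le> ln (x / (ln x)^2) / c" using c by real_asymp
  ultimately have "\<forall>\<^sub>F x in at_top. 1 < ln x \<and> 2 \<le> ?y x \<and> (?y x + 1) * (2 * x / ?s x) + 2 * (?y x + 1)^2 \<le> x
      \<and> 8 * (?y x + real t * ?s x / (?y x - 1) + 1) \<le> x / (real t * ?s x) \<and> 2 \<le> ln (x / (ln x)^2) / c"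
    by eventually_elim blast
  from eventually_compose_filterlim[OF this filterlim_real_sequentially]
  show ?thesis
  proof eventually_elim
    case (elim p)
    then show ?case
      using ln_T_ge_lower_ln_T[OF t] ln_T_le_upper_ln_T[OF t] by (simp add: log_def c_def)
  qed
qed

lemma ln_T_asymptotic:
  assumes t: "2 \<le> t"
  shows "((\<lambda>p. ln (T t p) / (tree_growth t * ln t * p / ln p)) \<longlongrightarrow> 1) sequentially"
proof -
  define M where "M p = tree_growth t * ln t * real p / ln (real p)" for p :: nat
  have "\<forall>\<^sub>F p in sequentially. 0 < M p" unfolding M_def using tree_growth_pos[OF t] t by real_asymp
  with eventually_ln_T_bounds[OF t]
  have bounds: "\<forall>\<^sub>F p in sequentially.
      lower_ln_T t p / M p \<le> ln (T t p) / M p \<and> ln (T t p) / M p \<le> upper_ln_T t p / M p"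
    by eventually_elim (intro conjI divide_right_mono; simp)
  have lower: "((\<lambda>p. lower_ln_T t p / M p) \<longlongrightarrow> 1) sequentially"
    using filterlim_compose[OF lower_ln_T_asymptotic[OF t] filterlim_real_sequentially] by (simp add: M_def)
  have upper: "((\<lambda>p. upper_ln_T t p / M p) \<longlongrightarrow> 1) sequentially"
    using filterlim_compose[OF upper_ln_T_asymptotic[OF t] filterlim_real_sequentially] by (simp add: M_def)
  have "((\<lambda>p. ln (T t p) / M p) \<longlongrightarrow> 1) sequentially"
    by (rule tendsto_sandwich[OF _ _ lower upper]) (use bounds in \<open>auto elim: eventually_mono\<close>)
  then show ?thesis by (simp add: M_def)
qed

theorem theorem1:
  fixes t :: nat and b :: real
  assumes "t \<ge> 2" and "b > 1"
  defines "\<alpha> \<equiv> entropy b (1 / real t) * real t * log b (real t)"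
  shows "((\<lambda>p::nat. log b (real (T t p)) / (\<alpha> * real p / log b (real p)))
          \<longlongrightarrow> 1) at_top"
proof -
  have t1: "1 < real t" using assms(1) by simp
  have "1 - 1 / real t = (real t - 1) / real t" using t1 by (simp add: field_simps)
  then have "ln (1 - 1 / real t) = ln (real t - 1) - ln (real t)" using t1 by (simp add: ln_div)
  then have "\<alpha> = tree_growth t * ln (real t) / (ln b)^2"
    using t1 assms(2) by (simp add: \<alpha>_def entropy_def log_def tree_growth_def ln_div field_simps power2_eq_square)
  then have "log b (T t p) / (\<alpha> * p / log b p) = ln (T t p) / (tree_growth t * ln t * p / ln p)" for p :: nat
    using assms(2) by (simp add: log_def field_simps power2_eq_square)
  then show ?thesis using ln_T_asymptotic[OF assms(1)] by simp
qed

end
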